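(* Let $0\le l\le\nu+\mu$ and suppose there exists $l_0\le l$ such that $|S_l^{l_0}(0)|=1$. Then $0\in T_l(M/K)$, i.e. there exists $l_1\le l$ with $|S_l^{l_1}(0)|=1$ and $S_l^a(0)=\varnothing$ for all $0\le a<l_1$.
   Context: Let $p$ be a prime and $K$ a field complete with respect to a discrete valuation whose residue field is perfect of characteristic $p$; fix a separable closure $K^{sep}$; $v_p$ is the $p$-adic valuation on $\mathbb{Z}$. $L/K$ is a finite totally ramified subextension of $K^{sep}/K$ of degree $n>1$ and $M/L$ a finite totally ramified subextension of $K^{sep}/L$ of degree $m>1$; $\nu=v_p(n)$, $\mu=v_p(m)$. For any such totally ramified extension $E/F$ of degree $N>1$ with $\eta=v_p(N)$, the indices of inseparability $i_0,\dots,i_\eta$ are defined by: choose uniformizers $\pi_F,\pi_E$, let $\hat{\mathcal{F}}(X)=\sum_{h\ge0}a_hX^{h+N}$ be the unique series with coefficients in the Teichmüller representatives of the residue field such that $\hat{\mathcal{F}}(\pi_E)=\pi_F$, put $\tilde{\imath}_j=\min\{h\ge0:v_p(h+N)\le j,\ a_h\ne0\}$ (or $\infty$), $i_\eta=0$ and $i_j=\min\{\tilde{\imath}_j,i_{j+1}+v_E(p)\}$ for $j=\eta-1,\dots,0$ ($v_E$ normalized with $v_E(E^\times)=\mathbb{Z}$, $v_E(p)=\infty$ in characteristic $p$). Set $\tilde{\phi}_{E/F}^j(x)=i_j+p^jx$ and $\phi_{E/F}^j(x)=\min\{\tilde{\phi}_{E/F}^{j_0}(x):0\le j_0\le j\}$.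 Let $i_j$ be the indices of $L/K$; define $\tilde{\phi}_{L/K}^{j,m}(x)=mi_j+p^jx$ and $\phi_{L/K}^{j,m}(x)=m\phi_{L/K}^j(x/m)$. For $0\le l\le\nu+\mu$ let $\Omega_l=\{(j,k):0\le j\le\nu,\ 0\le k\le\mu,\ j+k=l\}$, $\lambda_{M/K}^l(x)=\min\{\phi_{L/K}^{j,m}(\phi_{M/L}^k(x)):(j,k)\in\Omega_l\}$, and for $0\le a\le l$, $S_l^a(x)=\{(j,k)\in\Omega_a:\tilde{\phi}_{L/K}^{j,m}(\tilde{\phi}_{M/L}^k(x))=\lambda_{M/K}^l(x)\}$. Finally $T_l(M/K)=\{t\ge0:\exists\,l_1\le l\text{ with }|S_l^{l_1}(t)|=1\text{ and }|S_l^a(t)|=0\text{ for }0\le a<l_1\}$. *)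

theory Defs
  imports Complex_Main "HOL-Computational_Algebra.Primes" "HOL-Library.Extended_Nat"
begin

text \<open>
  A finite totally ramified extension E/F of degree N is represented by the data that the
  indices of inseparability depend on:
    N  : the degree,
    A  : the support {h. a_h \<noteq> 0} of the series  F(X) = sum_h a_h X^(h+N)  with F(pi_E) = pi_F,
    vp : v_E(p) \<in> enat  (\<infinity> in characteristic p).
  The p-adic valuation v_p is multiplicity p.
\<close>

definition tilde_idx :: "nat \<Rightarrow> nat \<Rightarrow> nat set \<Rightarrow> nat \<Rightarrow> enat" where
  "tilde_idx p N A j =
     (if \<exists>h\<in>A. multiplicity p (h + N) \<le> j
      then enat (LEAST h. h \<in> A \<and> multiplicity p (h + N) \<le> j) else \<infinity>)"

text \<open>idx_aux k is the index i_(eta-k), computed downward from i_eta = 0.\<close>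
primrec idx_aux :: "nat \<Rightarrow> nat \<Rightarrow> nat set \<Rightarrow> enat \<Rightarrow> nat \<Rightarrow> enat" where
  "idx_aux p N A vp 0 = 0"
| "idx_aux p N A vp (Suc k) =
     min (tilde_idx p N A (multiplicity p N - Suc k)) (idx_aux p N A vp k + vp)"

definition idx_e :: "nat \<Rightarrow> nat \<Rightarrow> nat set \<Rightarrow> enat \<Rightarrow> nat \<Rightarrow> enat" where
  "idx_e p N A vp j = idx_aux p N A vp (multiplicity p N - j)"

text \<open>The same, as a natural number (the indices are finite for separable extensions).\<close>
definition idx :: "nat \<Rightarrow> nat \<Rightarrow> nat set \<Rightarrow> enat \<Rightarrow> nat \<Rightarrow> nat" where
  "idx p N A vp j = the_enat (idx_e p N A vp j)"

definition phit :: "nat \<Rightarrow> nat \<Rightarrow> nat set \<Rightarrow> enat \<Rightarrow> nat \<Rightarrow> real \<Rightarrow> real" where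
  "phit p N A vp j x = real (idx p N A vp j) + real p ^ j * x"

definition phi :: "nat \<Rightarrow> nat \<Rightarrow> nat set \<Rightarrow> enat \<Rightarrow> nat \<Rightarrow> real \<Rightarrow> real" where
  "phi p N A vp j x = Min ((\<lambda>j0. phit p N A vp j0 x) ` {..j})"

definition phit_m :: "nat \<Rightarrow> nat \<Rightarrow> nat set \<Rightarrow> enat \<Rightarrow> nat \<Rightarrow> nat \<Rightarrow> real \<Rightarrow> real" where
  "phit_m p N A vp m j x = real m * real (idx p N A vp j) + real p ^ j * x"

definition phi_m :: "nat \<Rightarrow> nat \<Rightarrow> nat set \<Rightarrow> enat \<Rightarrow> nat \<Rightarrow> nat \<Rightarrow> real \<Rightarrow> real" where
  "phi_m p N A vp m j x = real m * phi p N A vp j (x / real m)"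

definition Omega :: "nat \<Rightarrow> nat \<Rightarrow> nat \<Rightarrow> (nat \<times> nat) set" where
  "Omega nu mu l = {(j, k). j \<le> nu \<and> k \<le> mu \<and> j + k = l}"

text \<open>Tower M/L/K: L/K given by (n, AL, vL), M/L given by (m, AM, vM).\<close>

definition lambdaMK ::
  "nat \<Rightarrow> nat \<Rightarrow> nat set \<Rightarrow> enat \<Rightarrow> nat \<Rightarrow> nat set \<Rightarrow> enat \<Rightarrow> nat \<Rightarrow> real \<Rightarrow> real" where
  "lambdaMK p n AL vL m AM vM l x =
     Min ((\<lambda>(j, k). phi_m p n AL vL m j (phi p m AM vM k x))
            ` Omega (multiplicity p n) (multiplicity p m) l)"

definition S_set ::
  "nat \<Rightarrow> nat \<Rightarrow> nat set \<Rightarrow> enat \<Rightarrow> nat \<Rightarrow> nat set \<Rightarrow> enat \<Rightarrow> nat \<Rightarrow> nat \<Rightarrow> real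
     \<Rightarrow> (nat \<times> nat) set" where
  "S_set p n AL vL m AM vM l a x =
     {(j, k) \<in> Omega (multiplicity p n) (multiplicity p m) a.
        phit_m p n AL vL m j (phit p m AM vM k x) = lambdaMK p n AL vL m AM vM l x}"

definition T_set ::
  "nat \<Rightarrow> nat \<Rightarrow> nat set \<Rightarrow> enat \<Rightarrow> nat \<Rightarrow> nat set \<Rightarrow> enat \<Rightarrow> nat \<Rightarrow> real set" where
  "T_set p n AL vL m AM vM l =
     {t. t \<ge> 0 \<and> (\<exists>l1 \<le> l. card (S_set p n AL vL m AM vM l l1 t) = 1 \<and>
                        (\<forall>a < l1. card (S_set p n AL vL m AM vM l a t) = 0))}"

end

theory Submission
  imports Defs
begin

text \<open>
  At x = 0 the value of the composite on (j, k) is m i_j(L/K) + p^j i_k(M/L). Both families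
  of indices decrease in the index, vanish at the top index and are positive below it. Hence
  along the anti-diagonals j + k = a \<le> l the pairs realising the minimum \<lambda> can be pushed
  injectively from diagonal a to diagonal a + 1 (increase k while k < \<mu>, otherwise increase j),
  so |S_l^a(0)| is non-decreasing in a. The first non-empty S_l^a(0) therefore has at most as
  many elements as S_l^(l_0)(0), i.e. exactly one.
\<close>

lemma tilde_idx_antimono:
  assumes "j \<le> j'"
  shows "tilde_idx p N A j' \<le> tilde_idx p N A j"
proof (cases "\<exists>h\<in>A. multiplicity p (h + N) \<le> j")
  case True
  then obtain h where h: "h \<in> A" "multiplicity p (h + N) \<le> j" by blast
  let ?L = "LEAST h. h \<in> A \<and> multiplicity p (h + N) \<le> j"
  have L: "?L \<in> A \<and> multiplicity p (?L + N) \<le> j"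
    by (rule LeastI[of _ h]) (use h in auto)
  have "\<exists>h\<in>A. multiplicity p (h + N) \<le> j'"
    using h assms le_trans by blast
  moreover have "(LEAST h. h \<in> A \<and> multiplicity p (h + N) \<le> j') \<le> ?L"
    by (rule Least_le) (use L assms in auto)
  ultimately show ?thesis
    using True unfolding tilde_idx_def by simp
qed (simp add: tilde_idx_def)

lemma tilde_idx_ge_1:
  assumes "j < multiplicity p N"
  shows "tilde_idx p N A j \<ge> 1"
proof (cases "\<exists>h\<in>A. multiplicity p (h + N) \<le> j")
  case True
  then obtain h where h: "h \<in> A" "multiplicity p (h + N) \<le> j" by blast
  let ?L = "LEAST h. h \<in> A \<and> multiplicity p (h + N) \<le> j"
  have "multiplicity p (?L + N) \<le> j"
    by (rule LeastI2[of _ h]) (use h in auto)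
  then have "?L \<noteq> 0"
    using assms by (metis add_0 not_le)
  then show ?thesis
    using True unfolding tilde_idx_def by (simp add: one_enat_def)
qed (simp add: tilde_idx_def)

lemma idx_aux_mono:
  assumes "k \<le> k'"
  shows "idx_aux p N A vp k \<le> idx_aux p N A vp k'"
proof (rule lift_Suc_mono_le[OF _ assms])
  fix k
  show "idx_aux p N A vp k \<le> idx_aux p N A vp (Suc k)"
  proof (cases k)
    case (Suc k')
    have "idx_aux p N A vp (Suc k') \<le> tilde_idx p N A (multiplicity p N - Suc k')"
      by simp
    also have "\<dots> \<le> tilde_idx p N A (multiplicity p N - Suc (Suc k'))"
      by (rule tilde_idx_antimono) simp
    finally show ?thesis
      using Suc by simp
  qed simp
qed

lemma idx_e_antimono:
  "j \<le> j' \<Longrightarrow> idx_e p N A vp j' \<le> idx_e p N A vp j"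
  unfolding idx_e_def by (rule idx_aux_mono) simp

lemma idx_e_finite:
  "idx_e p N A vp 0 \<noteq> \<infinity> \<Longrightarrow> idx_e p N A vp j \<noteq> \<infinity>"
  using idx_e_antimono[of 0 j p N A vp] by (cases "idx_e p N A vp j") auto

lemma idx_antimono:
  assumes "idx_e p N A vp 0 \<noteq> \<infinity>" and "j \<le> j'"
  shows "idx p N A vp j' \<le> idx p N A vp j"
  using idx_e_antimono[OF assms(2), of p N A vp] idx_e_finite[OF assms(1), of j]
  unfolding idx_def by (cases "idx_e p N A vp j'"; cases "idx_e p N A vp j") auto

lemma idx_top: "idx p N A vp (multiplicity p N) = 0"
  unfolding idx_def idx_e_def by (simp add: zero_enat_def)

lemma idx_e_ge_1:
  assumes "j < multiplicity p N" and "vp \<ge> 1"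
  shows "idx_e p N A vp j \<ge> 1"
proof -
  obtain k where k: "multiplicity p N - j = Suc k"
    using assms(1) by (metis Suc_diff_Suc)
  have "tilde_idx p N A (multiplicity p N - Suc k) \<ge> 1"
    using k by (intro tilde_idx_ge_1) simp
  moreover have "idx_aux p N A vp k + vp \<ge> 1"
    using assms(2) by (metis add.commute le_iff_add order_trans)
  ultimately show ?thesis
    unfolding idx_e_def using k by simp
qed

lemma idx_ge_1:
  assumes "idx_e p N A vp 0 \<noteq> \<infinity>" and "j < multiplicity p N" and "vp \<ge> 1"
  shows "idx p N A vp j \<ge> 1"
  using idx_e_ge_1[OF assms(2,3), of A] idx_e_finite[OF assms(1), of j]
  unfolding idx_def by (cases "idx_e p N A vp j") (auto simp: one_enat_def)

lemma finite_Omega: "finite (Omega nu mu a)"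
  by (rule finite_subset[of _ "{..nu} \<times> {..mu}"]) (auto simp: Omega_def)

lemma card_level_Omega_le_Suc:
  fixes f :: "nat \<Rightarrow> nat \<Rightarrow> real"
  assumes lower: "\<And>j k. j \<le> nu \<Longrightarrow> k \<le> mu \<Longrightarrow> j + k \<le> l \<Longrightarrow> lam \<le> f j k"
    and row_antimono: "\<And>j k. k < mu \<Longrightarrow> f j (Suc k) \<le> f j k"
    and edge_antimono: "\<And>j. j < nu \<Longrightarrow> f (Suc j) mu \<le> f j mu"
    and edge_less: "\<And>j k. k < mu \<Longrightarrow> f j mu < f j k"
    and "l \<le> nu + mu" and "a < l"
  shows "card {(j, k) \<in> Omega nu mu a. f j k = lam}
       \<le> card {(j, k) \<in> Omega nu mu (Suc a). f j k = lam}"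
proof -
  let ?S = "\<lambda>a. {(j, k) \<in> Omega nu mu a. f j k = lam}"
  define s where "s = (\<lambda>(j::nat, k::nat). if k < mu then (j, Suc k) else (Suc j, k))"
  have "s ` ?S a \<subseteq> ?S (Suc a)"
  proof (rule image_subsetI)
    fix x assume "x \<in> ?S a"
    then obtain j k where x: "x = (j, k)" and jk: "(j, k) \<in> Omega nu mu a" "f j k = lam"
      by blast
    have "s (j, k) \<in> ?S (Suc a)"
    proof (cases "k < mu")
      case True
      then have "f j (Suc k) = lam"
        using lower[of j "Suc k"] row_antimono[of k j] jk assms(6) by (auto simp: Omega_def)
      then show ?thesis
        using True jk by (auto simp: s_def Omega_def)
    next
      case False
      then have "k = mu" "j < nu"
        using jk assms(5,6) by (auto simp: Omega_def)
      then have "f (Suc j) mu = lam"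
        using lower[of "Suc j" mu] edge_antimono[of j] jk assms(6) by (auto simp: Omega_def)
      then show ?thesis
        using \<open>k = mu\<close> \<open>j < nu\<close> jk by (auto simp: s_def Omega_def)
    qed
    then show "s x \<in> ?S (Suc a)"
      using x by simp
  qed
  moreover have "inj_on s (?S a)"
  proof (rule inj_onI)
    fix x y assume x: "x \<in> ?S a" and y: "y \<in> ?S a" and e: "s x = s y"
    obtain j k j' k' where xy: "x = (j, k)" "y = (j', k')"
      by (cases x, cases y)
    \<comment> \<open>The only possible collision, (j, \<mu> - 1) and (j - 1, \<mu>), is excluded by edge_less.\<close>
    have no_collision: False
      if "k < mu" "(j, Suc k) = (Suc j', mu)" "(j, k) \<in> Omega nu mu a" "f j k = lam"
      for j k j'
    proof -
      have "lam \<le> f j mu"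
        using that assms(6) by (intro lower) (auto simp: Omega_def)
      then show False
        using edge_less[OF \<open>k < mu\<close>, of j] that by simp
    qed
    have "(j, k) = (j', k')"
    proof (cases "k < mu"; cases "k' < mu")
      assume "k < mu" "\<not> k' < mu"
      then show ?thesis
        using e x y no_collision[of k j j'] by (auto simp: xy s_def Omega_def)
    next
      assume "\<not> k < mu" "k' < mu"
      then show ?thesis
        using e x y no_collision[of k' j' j] by (auto simp: xy s_def Omega_def)
    qed (use e in \<open>auto simp: xy s_def\<close>)
    then show "x = y"
      using xy by simp
  qed
  ultimately show ?thesis
    by (intro card_inj_on_le) (auto intro: finite_subset[OF _ finite_Omega])
qed

lemma card_level_Omega_mono:
  fixes f :: "nat \<Rightarrow> nat \<Rightarrow> real"
  assumes "\<And>j k. j \<le> nu \<Longrightarrow> k \<le> mu \<Longrightarrow> j + k \<le> l \<Longrightarrow> lam \<le> f j k"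
    and "\<And>j k. k < mu \<Longrightarrow> f j (Suc k) \<le> f j k"
    and "\<And>j. j < nu \<Longrightarrow> f (Suc j) mu \<le> f j mu"
    and "\<And>j k. k < mu \<Longrightarrow> f j mu < f j k"
    and "l \<le> nu + mu" and "a \<le> b" and "b \<le> l"
  shows "card {(j, k) \<in> Omega nu mu a. f j k = lam}
       \<le> card {(j, k) \<in> Omega nu mu b. f j k = lam}"
  using assms(6,7)
proof (induction b rule: dec_induct)
  case (step b')
  have "b' < l"
    using step.prems by simp
  have "card {(j, k) \<in> Omega nu mu b'. f j k = lam}
      \<le> card {(j, k) \<in> Omega nu mu (Suc b'). f j k = lam}"
    by (rule card_level_Omega_le_Suc[of nu mu l lam f]) (fact assms \<open>b' < l\<close>)+
  with step show ?case
    by simp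
qed simp

lemma phi_le_phit: "j0 \<le> j \<Longrightarrow> phi p N A vp j x \<le> phit p N A vp j0 x"
  unfolding phi_def by (rule Min_le) auto

lemma phit_mono: "x \<le> y \<Longrightarrow> phit p N A vp j x \<le> phit p N A vp j y"
  unfolding phit_def by (simp add: mult_left_mono)

lemma phi_m_le_phit_m:
  assumes "m > 0" and "j0 \<le> j" and "x \<le> y"
  shows "phi_m p N A vp m j x \<le> phit_m p N A vp m j0 y"
proof -
  have "phi p N A vp j (x / m) \<le> phit p N A vp j0 (y / m)"
    using phi_le_phit[OF assms(2)] phit_mono assms(1,3)
    by (meson divide_right_mono of_nat_0_le_iff order_trans)
  then have "phi_m p N A vp m j x \<le> m * phit p N A vp j0 (y / m)"
    unfolding phi_m_def using assms(1) by simp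
  also have "\<dots> = phit_m p N A vp m j0 y"
    unfolding phit_def phit_m_def using assms(1) by (simp add: algebra_simps)
  finally show ?thesis .
qed

lemma lambdaMK_le_phit_m_phit:
  assumes "m > 0" and "l \<le> multiplicity p n + multiplicity p m"
    and "j0 \<le> multiplicity p n" and "k0 \<le> multiplicity p m" and "j0 + k0 \<le> l"
  shows "lambdaMK p n AL vL m AM vM l x \<le> phit_m p n AL vL m j0 (phit p m AM vM k0 x)"
proof -
  \<comment> \<open>Dominate (j0, k0) by a pair (J, K) on the anti-diagonal l.\<close>
  define J where "J = min (multiplicity p n) (l - k0)"
  define K where "K = l - J"
  have JK: "(J, K) \<in> Omega (multiplicity p n) (multiplicity p m) l" "j0 \<le> J" "k0 \<le> K"
    using assms(2-5) unfolding J_def K_def Omega_def by auto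
  have "lambdaMK p n AL vL m AM vM l x \<le> phi_m p n AL vL m J (phi p m AM vM K x)"
    unfolding lambdaMK_def using JK(1) by (intro Min_le finite_imageI finite_Omega) force
  also have "\<dots> \<le> phit_m p n AL vL m j0 (phit p m AM vM k0 x)"
    using JK(2,3) assms(1) by (intro phi_m_le_phit_m phi_le_phit)
  finally show ?thesis .
qed

lemma card_S_set_mono:
  assumes "p > 0" and "m > 0" and "vM \<ge> 1"
    and finL: "idx_e p n AL vL 0 \<noteq> \<infinity>" and finM: "idx_e p m AM vM 0 \<noteq> \<infinity>"
    and l: "l \<le> multiplicity p n + multiplicity p m" and "a \<le> b" and "b \<le> l"
  shows "card (S_set p n AL vL m AM vM l a 0) \<le> card (S_set p n AL vL m AM vM l b 0)"
proof -
  define f where "f = (\<lambda>j k. phit_m p n AL vL m j (phit p m AM vM k 0))"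
  have f: "f j k = m * idx p n AL vL j + p ^ j * idx p m AM vM k" for j k
    unfolding f_def phit_m_def phit_def by simp
  have row: "f j (Suc k) \<le> f j k" for j k
    using idx_antimono[OF finM, of k "Suc k"] by (simp add: f mult_left_mono)
  have edge: "f (Suc j) (multiplicity p m) \<le> f j (multiplicity p m)" for j
    using idx_antimono[OF finL, of j "Suc j"] by (simp add: f idx_top mult_left_mono)
  have edge_less: "f j (multiplicity p m) < f j k" if "k < multiplicity p m" for j k
    using idx_ge_1[OF finM that assms(3)] assms(1) by (simp add: f idx_top)
  show ?thesis
    unfolding S_set_def f_def[symmetric]
    using lambdaMK_le_phit_m_phit[OF assms(2) l] row edge edge_less l assms(7,8)
    by (intro card_level_Omega_mono[where l = l]) (auto simp: f_def)
qed

lemma first_nonempty_card_one: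
  fixes S :: "nat \<Rightarrow> 'a set"
  assumes mono: "\<And>a b. a \<le> b \<Longrightarrow> b \<le> l \<Longrightarrow> card (S a) \<le> card (S b)"
    and "l0 \<le> l" and "card (S l0) = 1"
  shows "\<exists>l1 \<le> l. card (S l1) = 1 \<and> (\<forall>a < l1. card (S a) = 0)"
proof -
  define l1 where "l1 = (LEAST a. card (S a) \<noteq> 0)"
  have "card (S l1) \<noteq> 0"
    unfolding l1_def by (rule LeastI[of _ l0]) (use assms(3) in simp)
  moreover have "l1 \<le> l0"
    unfolding l1_def using assms(3) by (intro Least_le) simp
  moreover have "\<forall>a < l1. card (S a) = 0"
    unfolding l1_def using not_less_Least by blast
  ultimately show ?thesis
    using mono[of l1 l0] assms(2,3) by (intro exI[of _ l1]) auto
qed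

theorem lemma3p5:
  fixes p n m l :: nat and AL AM :: "nat set" and eK :: enat
  assumes "prime p" and "n > 1" and "m > 1"
    and "eK \<ge> 1"
    and "0 \<in> AL" and "0 \<in> AM"
    and "idx_e p n AL (of_nat n * eK) 0 \<noteq> \<infinity>"
    and "idx_e p m AM (of_nat (m * n) * eK) 0 \<noteq> \<infinity>"
    and "l \<le> multiplicity p n + multiplicity p m"
    and "\<exists>l0 \<le> l. card (S_set p n AL (of_nat n * eK) m AM (of_nat (m * n) * eK) l l0 0) = 1"
  shows "0 \<in> T_set p n AL (of_nat n * eK) m AM (of_nat (m * n) * eK) l"
proof -
  let ?S = "\<lambda>a. S_set p n AL (of_nat n * eK) m AM (of_nat (m * n) * eK) l a 0"
  have "(1::enat) \<le> of_nat (m * n)"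
    using assms(2,3) by (simp add: one_enat_def of_nat_eq_enat)
  then have "(1::enat) \<le> of_nat (m * n) * eK"
    using assms(4) mult_mono[of "1::enat" _ 1 eK] by simp
  then have mono: "card (?S a) \<le> card (?S b)" if "a \<le> b" "b \<le> l" for a b
    using assms(1,3,7-9) that by (intro card_S_set_mono) (auto simp: prime_gt_0_nat)
  obtain l0 where "l0 \<le> l" "card (?S l0) = 1"
    using assms(10) by blast
  then have "\<exists>l1 \<le> l. card (?S l1) = 1 \<and> (\<forall>a < l1. card (?S a) = 0)"
    using mono by (intro first_nonempty_card_one)
  then show ?thesis
    unfolding T_set_def by simp
qed

end
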